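(* In the $\ell$-variant cup game, if at some time there is a cup of fill $k$ for some integer $k\ge3$, then at that time there is a cup of fill $k-1$ or a cup of fill $k-2$.
   Context: The $\ell$-variant cup game on $n$ cups ($\ell$ a positive integer): $n$ cups with integer fills, all initially $0$. In each round the player chooses an integer $k'\ge0$ and an integer $q\ge1$ such that at least $2q$ cups have fill exactly $k'$. Among these cups, exactly $q$ are raised to $k'+1$; if $k'$ is a multiple of $\ell$ the other $q$ stay at $k'$, and otherwise $q$ other such cups are lowered to $k'-1$. *)

theory Defs
  imports Main
begin

text \<open>Cups are indexed by 0..<n; a configuration assigns an integer fill to each cup
  (values at indices \<ge> n are irrelevant and stay 0).\<close>

definition cup_move :: "nat \<Rightarrow> nat \<Rightarrow> (nat \<Rightarrow> int) \<Rightarrow> (nat \<Rightarrow> int) \<Rightarrow> bool" where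
  "cup_move l n f g \<longleftrightarrow>
     (\<exists>(k::int) (q::nat) U D. k \<ge> 0 \<and> q \<ge> 1 \<and>
        U \<subseteq> {..<n} \<and> D \<subseteq> {..<n} \<and> U \<inter> D = {} \<and>
        card U = q \<and> card D = q \<and> (\<forall>i \<in> U \<union> D. f i = k) \<and>
        g = (\<lambda>i. if i \<in> U then k + 1
                  else if i \<in> D \<and> \<not> (int l dvd k) then k - 1
                  else f i))"

inductive cup_reachable :: "nat \<Rightarrow> nat \<Rightarrow> (nat \<Rightarrow> int) \<Rightarrow> bool" for l n where
  init: "cup_reachable l n (\<lambda>_. 0)"
| step: "cup_reachable l n f \<Longrightarrow> cup_move l n f g \<Longrightarrow> cup_reachable l n g"

end

theory Submission
  imports Defs
begin

text \<open>The initial configuration is trivially well supported, and a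
  move at level \<open>k\<close> keeps this property: it only touches cups of fill \<open>k\<close>, the raised cups
  at \<open>k + 1\<close> are supported by the other half of the chosen cups (now at \<open>k\<close> or \<open>k - 1\<close>), a cup
  whose witness at \<open>k\<close> moved is supported by one of the moved cups, and a lowered cup at
  \<open>k - 1\<close> is supported by an untouched cup found by applying the invariant at most twice.
  The argument never uses \<open>l\<close>.\<close>

definition supported :: "nat \<Rightarrow> (nat \<Rightarrow> int) \<Rightarrow> int \<Rightarrow> bool" where
  "supported n f v \<longleftrightarrow> (\<exists>j<n. f j = v - 1 \<or> f j = v - 2)"

definition well_supported :: "nat \<Rightarrow> (nat \<Rightarrow> int) \<Rightarrow> bool" where
  "well_supported n f \<longleftrightarrow> (\<forall>i<n. 3 \<le> f i \<longrightarrow> supported n f (f i))"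

lemma cup_move_shape:
  assumes "cup_move l n f g"
  obtains u k d where "u < n" "g u = k + 1" "d < n" "g d = k \<or> g d = k - 1"
    and "\<And>j. f j \<noteq> k \<Longrightarrow> g j = f j"
    and "\<And>i. g i = f i \<or> g i = k + 1 \<or> (f i = k \<and> g i = k - 1)"
proof -
  obtain k q U D where "q \<ge> 1" "U \<subseteq> {..<n}" "D \<subseteq> {..<n}" "U \<inter> D = {}"
    "card U = q" "card D = q" "\<forall>i \<in> U \<union> D. f i = k"
    "g = (\<lambda>i. if i \<in> U then k + 1
                  else if i \<in> D \<and> \<not> (int l dvd k) then k - 1
                  else f i)"
    using assms unfolding cup_move_def by blast
  moreover have "U \<noteq> {}" "D \<noteq> {}"
    using \<open>q \<ge> 1\<close> \<open>card U = q\<close> \<open>card D = q\<close> by auto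
  then obtain u d where "u \<in> U" "d \<in> D"
    by blast
  ultimately show thesis
    by (intro that[of u k d]) auto
qed

lemma cup_move_preserves_well_supported:
  assumes inv: "well_supported n f" and move: "cup_move l n f g"
  shows "well_supported n g"
  unfolding well_supported_def supported_def
proof (intro allI impI)
  obtain u k d where u: "u < n" "g u = k + 1" and d: "d < n" "g d = k \<or> g d = k - 1"
    and untouched: "\<And>j. f j \<noteq> k \<Longrightarrow> g j = f j"
    and moved: "\<And>i. g i = f i \<or> g i = k + 1 \<or> (f i = k \<and> g i = k - 1)"
    by (rule cup_move_shape[OF move]) blast
  have f_witness: "\<exists>j<n. f j = f i - 1 \<or> f j = f i - 2" if "i < n" "3 \<le> f i" for i
    using inv that unfolding well_supported_def supported_def by blast
  fix i assume i: "i < n" "3 \<le> g i"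
  consider "g i = k + 1" | "f i = k" "g i = k - 1" | "g i = f i"
    using moved by blast
  then show "\<exists>j<n. g j = g i - 1 \<or> g j = g i - 2"
  proof cases
    case 1
    with d show ?thesis by (intro exI[of _ d]) auto
  next
    case 2
    with i obtain j where j: "j < n" "f j = k - 1 \<or> f j = k - 2"
      using f_witness[of i] by auto
    show ?thesis
    proof (cases "f j = k - 2")
      case True
      with j 2 show ?thesis using untouched[of j] by (intro exI[of _ j]) auto
    next
      case False
      with j 2 i obtain j' where j': "j' < n" "f j' = k - 2 \<or> f j' = k - 3"
        using f_witness[of j] by auto
      with 2 show ?thesis using untouched[of j'] by (intro exI[of _ j']) auto
    qed
  next
    case 3
    with i obtain j where j: "j < n" "f j = f i - 1 \<or> f j = f i - 2"
      using f_witness[of i] by auto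
    show ?thesis
    proof (cases "f j = k")
      case False
      with j 3 show ?thesis using untouched[of j] by (intro exI[of _ j]) auto
    next
      case True
      with j 3 consider "g i = k + 1" | "g i = k + 2"
        by fastforce
      then show ?thesis
      proof cases
        case 1
        with d show ?thesis by (intro exI[of _ d]) auto
      next
        case 2
        with u show ?thesis by (intro exI[of _ u]) auto
      qed
    qed
  qed
qed

lemma cup_reachable_well_supported:
  assumes "cup_reachable l n f"
  shows "well_supported n f"
  using assms
proof (induction rule: cup_reachable.induct)
  case init
  then show ?case unfolding well_supported_def by simp
next
  case (step f g)
  then show ?case using cup_move_preserves_well_supported by blast
qed

theorem proposition6p5:
  fixes l n :: nat and f :: "nat \<Rightarrow> int" and k :: int and i :: nat
  assumes "l \<ge> 1"
    and "cup_reachable l n f"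
    and "i < n" and "f i = k" and "k \<ge> 3"
  shows "\<exists>j < n. f j = k - 1 \<or> f j = k - 2"
  using cup_reachable_well_supported[OF assms(2)] assms(3-5)
  unfolding well_supported_def supported_def by blast

end
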